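(* Let $(\mathcal X,\mathcal F,\nu)$ be a probability space equipped with an atomic filtration (as described in the context), and let $w$ be a weight with $w>0$ $\nu$-a.e. Then for every $f\in L^1(\nu)$ with $\int_{\mathcal X}f\,d\nu=0$, $$\|f\|_{L^2(w)}\le\|S\|_{L^2(w^{-1})\to L^2(w^{-1})}\,\|Sf\|_{L^2(w)},$$ where $\|S\|_{L^2(w^{-1})\to L^2(w^{-1})}=\sup\{\|Sg\|_{L^2(w^{-1})}:\|g\|_{L^2(w^{-1})}\le1\}\in[0,\infty]$.
   Context: Atomic filtration: $\mathcal F_0\subset\mathcal F_1\subset\cdots$ is an increasing sequence of $\sigma$-algebras generating $\mathcal F$, with $\mathcal F_0=\{\emptyset,\mathcal X\}$, and each $\mathcal F_n$ is generated by a finite partition $\mathcal D_n$ of $\mathcal X$ into sets of positive measure (atoms); $\mathcal D_0=\{\mathcal X\}$. An atom is formally a pair $(I,n)$ with $I\in\mathcal D_n$; $\mathcal D=\bigcup_n\mathcal D_n$, and $\mathrm{ch}(I)$ are the atoms of $\mathcal D_{n+1}$ contained in $I$. Averages $\langle f\rangle_I=\nu(I)^{-1}\int_I f\,d\nu$, $\mathbb E_If=\langle f\rangle_I\mathbf 1_I$; $\Delta_I f=\sum_{I'\in\mathrm{ch}(I)}\mathbb E_{I'}f-\mathbb E_If$; $Sf=\big(\sum_{I\in\mathcal D}(\Delta_If)^2\big)^{1/2}$. For a weight $u>0$ a.e., $\|f\|^2_{L^2(u)}=\int|f|^2u\,d\nu$. *)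

theory Defs
  imports "HOL-Probability.Probability"
begin

text \<open>Atomic filtration: D n is the finite partition of the space into atoms
  (measurable sets of positive measure) generating F_n; F_0 trivial,
  F_n increasing, and the F_n generate the sigma-algebra of M.\<close>
definition atomic_filtration :: "'a measure \<Rightarrow> (nat \<Rightarrow> 'a set set) \<Rightarrow> bool" where
  "atomic_filtration M D \<longleftrightarrow>
     (\<forall>n. finite (D n) \<and> disjoint (D n) \<and> \<Union>(D n) = space M \<and>
          (\<forall>I\<in>D n. I \<in> sets M \<and> measure M I > 0)) \<and>
     D 0 = {space M} \<and>
     (\<forall>n. sigma_sets (space M) (D n) \<subseteq> sigma_sets (space M) (D (Suc n))) \<and>
     sets M = sigma_sets (space M) (\<Union>n. D n)"

definition avg :: "'a measure \<Rightarrow> 'a set \<Rightarrow> ('a \<Rightarrow> real) \<Rightarrow> real" where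
  "avg M I f = (\<integral>x\<in>I. f x \<partial>M) / measure M I"

definition ch :: "(nat \<Rightarrow> 'a set set) \<Rightarrow> nat \<Rightarrow> 'a set \<Rightarrow> 'a set set" where
  "ch D n I = {I' \<in> D (Suc n). I' \<subseteq> I}"

definition Delta :: "'a measure \<Rightarrow> (nat \<Rightarrow> 'a set set) \<Rightarrow> nat \<Rightarrow> 'a set \<Rightarrow> ('a \<Rightarrow> real) \<Rightarrow> 'a \<Rightarrow> real" where
  "Delta M D n I f x =
     (\<Sum>I'\<in>ch D n I. avg M I' f * indicator I' x) - avg M I f * indicator I x"

text \<open>Square of the square function: (S f x)^2 = sum over all atoms (I,n) of (Delta_(I,n) f x)^2,
  valued in [0,\<infinity>].\<close>
definition Ssq :: "'a measure \<Rightarrow> (nat \<Rightarrow> 'a set set) \<Rightarrow> ('a \<Rightarrow> real) \<Rightarrow> 'a \<Rightarrow> ennreal" where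
  "Ssq M D f x = (\<Sum>n. \<Sum>I\<in>D n. ennreal ((Delta M D n I f x)\<^sup>2))"

definition wnorm2 :: "'a measure \<Rightarrow> ('a \<Rightarrow> real) \<Rightarrow> ('a \<Rightarrow> real) \<Rightarrow> ennreal" where
  "wnorm2 M u g = (\<integral>\<^sup>+x. ennreal ((g x)\<^sup>2 * u x) \<partial>M)"

definition Snorm2 :: "'a measure \<Rightarrow> (nat \<Rightarrow> 'a set set) \<Rightarrow> ('a \<Rightarrow> real) \<Rightarrow> ('a \<Rightarrow> real) \<Rightarrow> ennreal" where
  "Snorm2 M D u g = (\<integral>\<^sup>+x. Ssq M D g x * ennreal (u x) \<partial>M)"

text \<open>Squared operator norm ||S||^2_{L^2(u) -> L^2(u)}, sup over g in L^1 (where S g is defined)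
  with ||g||_{L^2(u)} \<le> 1.\<close>
definition opnorm2 :: "'a measure \<Rightarrow> (nat \<Rightarrow> 'a set set) \<Rightarrow> ('a \<Rightarrow> real) \<Rightarrow> ennreal" where
  "opnorm2 M D u = (SUP g \<in> {g. integrable M g \<and> wnorm2 M u g \<le> 1}. Snorm2 M D u g)"

end

theory Submission
  imports Defs
begin

text \<open>Write E_N f for the average of f on the atom of D N containing a point. For a bounded test
  function h, the integral of E_N f h telescopes into the sum over n < N and I \<in> D n of the
  integrals of \<Delta>_I f \<Delta>_I h (the term N = 0 vanishes because f has mean zero), and a monotone
  class argument shows E_N f \<longrightarrow> f in L^1. Hence \<integral> f h is at most the integral of
  \<Sum> |\<Delta>_I f| |\<Delta>_I h|, which AM-GM bounds by t/2 \<parallel>Sf\<parallel>^2_{L^2(w)} + 1/(2t) \<parallel>Sh\<parallel>^2_{L^2(1/w)}.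
  Testing with truncations h of f w, which satisfy \<parallel>h\<parallel>^2_{L^2(1/w)} \<le> \<integral> f h, and taking t = \<parallel>S\<parallel>^2
  gives \<integral> f h \<le> \<parallel>S\<parallel>^2 \<parallel>Sf\<parallel>^2_{L^2(w)}; monotone convergence in the truncation level finishes.\<close>

lemma sum_indicator_at:
  assumes "finite P" "disjoint P" "J \<in> P" "x \<in> J"
  shows "(\<Sum>K\<in>P. c K * indicator K x) = (c J :: real)"
proof -
  have "(\<Sum>K\<in>P - {J}. c K * indicator K x) = 0"
  proof (rule sum.neutral, intro ballI)
    fix K assume "K \<in> P - {J}"
    then have "x \<notin> K" using assms unfolding disjoint_def by blast
    then show "c K * indicator K x = 0" by simp
  qed
  then show ?thesis using sum.remove[OF assms(1,3), of "\<lambda>K. c K * indicator K x"] assms(4) by simp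
qed

lemma sum_indicator_outside:
  "x \<notin> \<Union>P \<Longrightarrow> (\<Sum>K\<in>P. c K * indicator K x) = (0::real)"
  by (intro sum.neutral) auto

lemma sum_indicator_mult:
  assumes "finite P" "disjoint P"
  shows "(\<Sum>K\<in>P. a K * indicator K x) * (\<Sum>K\<in>P. b K * indicator K x)
    = (\<Sum>K\<in>P. (a K * b K) * indicator K x :: real)"
proof (cases "x \<in> \<Union>P")
  case True
  then obtain J where "J \<in> P" "x \<in> J" by blast
  then show ?thesis using sum_indicator_at[OF assms] by simp
qed (simp add: sum_indicator_outside)

lemma abs_sum_indicator:
  assumes "finite P" "disjoint P"
  shows "\<bar>\<Sum>K\<in>P. a K * indicator K x\<bar> = (\<Sum>K\<in>P. \<bar>a K\<bar> * indicator K x :: real)"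
proof (cases "x \<in> \<Union>P")
  case True
  then obtain J where "J \<in> P" "x \<in> J" by blast
  then show ?thesis using sum_indicator_at[OF assms] by simp
qed (simp add: sum_indicator_outside)

lemma sigma_sets_subset_or_disjoint:
  assumes "disjoint P" "A \<in> sigma_sets \<Omega> P" "J \<in> P" "J \<subseteq> \<Omega>"
  shows "J \<subseteq> A \<or> J \<inter> A = {}"
  using assms(2)
proof (induction rule: sigma_sets.induct)
  case (Basic a)
  then show ?case using assms unfolding disjoint_def by blast
next
  case (Compl a)
  then show ?case using assms(4) by blast
qed auto

lemma abs_mult_le_amgm:
  fixes a b t w :: real
  assumes t: "t > 0" and w: "w > 0"
  shows "\<bar>a\<bar> * \<bar>b\<bar> \<le> t / 2 * (a\<^sup>2 * w) + 1 / (2 * t) * (b\<^sup>2 * (1 / w))"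
proof -
  define s where "s = t * w"
  have s: "s > 0" using t w unfolding s_def by simp
  have "0 \<le> (s * \<bar>a\<bar> - \<bar>b\<bar>)\<^sup>2" by simp
  then have "\<bar>a\<bar> * \<bar>b\<bar> \<le> (s\<^sup>2 * a\<^sup>2 + b\<^sup>2) / (2 * s)"
    using s by (simp add: power2_eq_square field_simps)
  also have "\<dots> = t / 2 * (a\<^sup>2 * w) + 1 / (2 * t) * (b\<^sup>2 * (1 / w))"
    using t w unfolding s_def by (simp add: field_simps power2_eq_square)
  finally show ?thesis .
qed

lemma ennreal_le_mult_if_le_amgm:
  fixes a b :: real and C :: ennreal
  assumes a: "0 \<le> a" and b: "0 < b"
    and le: "ennreal a \<le> ennreal (b / 2) * C + ennreal (1 / (2 * b)) * (ennreal b * ennreal a)"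
  shows "ennreal a \<le> ennreal b * C"
proof (cases C)
  case (real c)
  note le
  also have "ennreal (b / 2) * C + ennreal (1 / (2 * b)) * (ennreal b * ennreal a)
      = ennreal (b / 2 * c) + ennreal (a / 2)"
    using a b real by (simp add: ennreal_mult[symmetric])
  also have "\<dots> = ennreal (b / 2 * c + a / 2)"
    using a b real by (intro ennreal_plus[symmetric]) auto
  finally have "ennreal a \<le> ennreal (b / 2 * c + a / 2)" .
  moreover have "0 \<le> b / 2 * c + a / 2" using a b real by simp
  ultimately have "a \<le> b / 2 * c + a / 2" using ennreal_le_iff by blast
  then have "a \<le> b * c" by simp
  then show ?thesis using real b by (simp add: ennreal_mult[symmetric])
qed (use b in simp)

definition truncated_dual :: "nat \<Rightarrow> ('a \<Rightarrow> real) \<Rightarrow> ('a \<Rightarrow> real) \<Rightarrow> 'a \<Rightarrow> real" where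
  "truncated_dual K w f x = (if \<bar>f x\<bar> \<le> real K then f x * max 0 (min (w x) (real K)) else 0)"

lemma abs_truncated_dual_le: "\<bar>truncated_dual K w f x\<bar> \<le> real K * real K"
proof (cases "\<bar>f x\<bar> \<le> real K")
  case True
  have "\<bar>f x\<bar> * \<bar>max 0 (min (w x) (real K))\<bar> \<le> real K * real K"
    using True by (intro mult_mono) auto
  then show ?thesis using True unfolding truncated_dual_def by (simp add: abs_mult)
qed (simp add: truncated_dual_def)

lemma mult_truncated_dual:
  "f x * truncated_dual K w f x = (if \<bar>f x\<bar> \<le> real K then (f x)\<^sup>2 * max 0 (min (w x) (real K)) else 0)"
  unfolding truncated_dual_def by (simp add: power2_eq_square mult.assoc)

lemma mult_truncated_dual_nonneg: "0 \<le> f x * truncated_dual K w f x"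
  unfolding mult_truncated_dual by simp

lemma truncated_dual_square_div_le: "(truncated_dual K w f x)\<^sup>2 * (1 / w x) \<le> f x * truncated_dual K w f x"
proof (cases "\<bar>f x\<bar> \<le> real K \<and> w x > 0")
  case True
  define m where "m = max 0 (min (w x) (real K))"
  have "m * m \<le> m * w x" using True unfolding m_def by (intro mult_left_mono) auto
  then have "(f x)\<^sup>2 * (m * m / w x) \<le> (f x)\<^sup>2 * m"
    using True by (intro mult_left_mono) (auto simp: field_simps)
  then show ?thesis using True unfolding mult_truncated_dual truncated_dual_def m_def[symmetric]
    by (simp add: power2_eq_square field_simps)
qed (auto simp: truncated_dual_def)

lemma incseq_mult_truncated_dual: "incseq (\<lambda>K. f x * truncated_dual K w f x)"
  unfolding mult_truncated_dual by (rule incseq_SucI) (auto intro!: mult_left_mono)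

lemma SUP_mult_truncated_dual:
  "(SUP K. ennreal (f x * truncated_dual K w f x)) = ennreal ((f x)\<^sup>2 * w x)"
proof (cases "w x > 0")
  case True
  define K0 where "K0 = nat \<lceil>max \<bar>f x\<bar> (w x)\<rceil>"
  have "max \<bar>f x\<bar> (w x) \<le> real K0" unfolding K0_def by linarith
  then have K0: "f x * truncated_dual K0 w f x = (f x)\<^sup>2 * w x"
    unfolding mult_truncated_dual using True by auto
  have "f x * truncated_dual K w f x \<le> (f x)\<^sup>2 * w x" for K
    unfolding mult_truncated_dual using True by (auto intro: mult_left_mono)
  then show ?thesis
    by (intro antisym SUP_least ennreal_leI) (auto intro: SUP_upper2[of K0] simp: K0)
next
  case False
  then have "(\<lambda>K. ennreal (f x * truncated_dual K w f x)) = (\<lambda>K. 0)"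
    unfolding mult_truncated_dual by auto
  moreover have "ennreal ((f x)\<^sup>2 * w x) = 0"
    using False by (simp add: ennreal_eq_0_iff mult_nonneg_nonpos)
  ultimately show ?thesis by (simp only:) simp
qed

lemma borel_measurable_truncated_dual [measurable]:
  assumes [measurable]: "w \<in> borel_measurable M" "f \<in> borel_measurable M"
  shows "truncated_dual K w f \<in> borel_measurable M"
  unfolding truncated_dual_def[abs_def] by measurable

context finite_measure
begin

lemma integrable_indicator_sets: "A \<in> sets M \<Longrightarrow> integrable M (indicator A :: 'a \<Rightarrow> real)"
  by (simp add: less_top[symmetric])

lemma integrable_step:
  "finite P \<Longrightarrow> P \<subseteq> sets M \<Longrightarrow> integrable M (\<lambda>x. \<Sum>J\<in>P. c J * indicator J x :: real)"
  by (intro Bochner_Integration.integrable_sum integrable_mult_right integrable_indicator_sets) auto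

lemma integral_step:
  assumes "finite P" "P \<subseteq> sets M"
  shows "(\<integral>x. (\<Sum>J\<in>P. c J * indicator J x) \<partial>M) = (\<Sum>J\<in>P. c J * measure M J)"
proof -
  have "(\<integral>x. (\<Sum>J\<in>P. c J * indicator J x) \<partial>M) = (\<Sum>J\<in>P. (\<integral>x. c J * indicator J x \<partial>M))"
    using assms by (intro Bochner_Integration.integral_sum integrable_mult_right integrable_indicator_sets) auto
  also have "\<dots> = (\<Sum>J\<in>P. c J * measure M J)"
    using assms sets.Int_space_eq2 by (intro sum.cong refl) auto
  finally show ?thesis .
qed

end

lemma integrable_mult_bounded:
  fixes g h :: "'a \<Rightarrow> real"
  assumes g: "integrable M g" and h: "h \<in> borel_measurable M" and hb: "\<And>x. x \<in> space M \<Longrightarrow> \<bar>h x\<bar> \<le> K"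
  shows "integrable M (\<lambda>x. g x * h x)"
proof (rule Bochner_Integration.integrable_bound[of _ "\<lambda>x. K * g x"])
  show "AE x in M. norm (g x * h x) \<le> norm (K * g x)"
  proof (rule AE_I2)
    fix x assume "x \<in> space M"
    then have "\<bar>g x\<bar> * \<bar>h x\<bar> \<le> \<bar>g x\<bar> * \<bar>K\<bar>" using hb by (intro mult_left_mono) force+
    then show "norm (g x * h x) \<le> norm (K * g x)" by (simp add: abs_mult mult.commute)
  qed
qed (use g h in auto)

locale atomic_filtration_space = prob_space M for M :: "'a measure" +
  fixes D :: "nat \<Rightarrow> 'a set set"
  assumes atomic_filtration: "atomic_filtration M D"
begin

lemma finite_atoms: "finite (D n)"
  and disjoint_atoms: "disjoint (D n)"
  and Union_atoms: "\<Union>(D n) = space M"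
  and atom_sets: "I \<in> D n \<Longrightarrow> I \<in> sets M"
  and atom_measure_pos: "I \<in> D n \<Longrightarrow> 0 < measure M I"
  and atoms_0: "D 0 = {space M}"
  and sigma_atoms_Suc: "sigma_sets (space M) (D n) \<subseteq> sigma_sets (space M) (D (Suc n))"
  and sets_eq_sigma_atoms: "sets M = sigma_sets (space M) (\<Union>n. D n)"
  using atomic_filtration unfolding atomic_filtration_def by auto

lemma atom_subset_space: "I \<in> D n \<Longrightarrow> I \<subseteq> space M"
  using atom_sets sets.sets_into_space by blast

lemma atom_nonempty: "I \<in> D n \<Longrightarrow> I \<noteq> {}"
  using atom_measure_pos by fastforce

lemma obtain_atom:
  assumes "x \<in> space M" obtains J where "J \<in> D n" "x \<in> J"
  using assms Union_atoms[of n] by blast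

lemma sigma_atoms_mono: "n \<le> m \<Longrightarrow> sigma_sets (space M) (D n) \<subseteq> sigma_sets (space M) (D m)"
  by (induction m rule: dec_induct) (use sigma_atoms_Suc in auto)

lemma sigma_atoms_subset_sets: "sigma_sets (space M) (D n) \<subseteq> sets M"
  unfolding sets_eq_sigma_atoms by (rule sigma_sets_mono') auto

lemma atom_subset_or_disjoint_sigma:
  assumes "A \<in> sigma_sets (space M) (D n)" "n \<le> m" "J \<in> D m"
  shows "J \<subseteq> A \<or> J \<inter> A = {}"
  using sigma_sets_subset_or_disjoint[OF disjoint_atoms _ assms(3) atom_subset_space[OF assms(3)]]
    sigma_atoms_mono[OF assms(2)] assms(1) by blast

lemma atom_subset_or_disjoint: "n \<le> m \<Longrightarrow> I \<in> D n \<Longrightarrow> J \<in> D m \<Longrightarrow> J \<subseteq> I \<or> J \<inter> I = {}"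
  using atom_subset_or_disjoint_sigma[of I n m J] by (meson sigma_sets.Basic)

lemma finite_ch: "finite (ch D n I)"
  unfolding ch_def using finite_atoms[of "Suc n"] by simp

lemma disjoint_ch: "disjoint (ch D n I)"
  unfolding ch_def using disjoint_atoms[of "Suc n"] unfolding disjoint_def by blast

lemma ch_atoms: "J \<in> ch D n I \<Longrightarrow> J \<in> D (Suc n)"
  unfolding ch_def by auto

lemma ch_sets: "ch D n I \<subseteq> sets M"
  using ch_atoms atom_sets by blast

lemma atom_Suc_subset:
  assumes "J \<in> D (Suc n)" obtains I where "I \<in> D n" "J \<subseteq> I"
proof -
  obtain x where "x \<in> J" using atom_nonempty assms by blast
  then obtain I where "I \<in> D n" "x \<in> I" using obtain_atom atom_subset_space assms by blast
  then show ?thesis using that atom_subset_or_disjoint[of n "Suc n" I J] assms \<open>x \<in> J\<close> by auto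
qed

lemma Union_ch: "I \<in> D n \<Longrightarrow> \<Union>(ch D n I) = I"
proof
  assume I: "I \<in> D n"
  show "I \<subseteq> \<Union>(ch D n I)"
  proof
    fix x assume "x \<in> I"
    then obtain J where J: "J \<in> D (Suc n)" "x \<in> J" using obtain_atom atom_subset_space I by blast
    then have "J \<subseteq> I" using atom_subset_or_disjoint[of n "Suc n" I J] I \<open>x \<in> I\<close> by auto
    then show "x \<in> \<Union>(ch D n I)" using J unfolding ch_def by auto
  qed
qed (auto simp: ch_def)

lemma atoms_Suc_eq_UN_ch: "D (Suc n) = (\<Union>I\<in>D n. ch D n I)"
proof (intro subset_antisym subsetI)
  fix J assume J: "J \<in> D (Suc n)"
  then obtain I where "I \<in> D n" "J \<subseteq> I" by (rule atom_Suc_subset)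
  with J show "J \<in> (\<Union>I\<in>D n. ch D n I)" unfolding ch_def by blast
qed (auto simp: ch_def)

lemma disjoint_ch_ch:
  assumes "I \<in> D n" "I' \<in> D n" "I \<noteq> I'" shows "ch D n I \<inter> ch D n I' = {}"
proof -
  have "I \<inter> I' = {}" using assms disjoint_atoms[of n] unfolding disjoint_def by blast
  then show ?thesis using atom_nonempty unfolding ch_def by blast
qed

lemma sum_atoms_Suc: "(\<Sum>J\<in>D (Suc n). g J) = (\<Sum>I\<in>D n. \<Sum>J\<in>ch D n I. g J)"
  unfolding atoms_Suc_eq_UN_ch
  by (rule sum.UNION_disjoint) (use finite_atoms finite_ch disjoint_ch_ch in auto)

lemma indicator_eq_sum_ch:
  assumes "I \<in> D n"
  shows "indicator I x = (\<Sum>J\<in>ch D n I. indicator J x :: real)"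
proof (cases "x \<in> I")
  case True
  then obtain J where J: "J \<in> ch D n I" "x \<in> J" using Union_ch[OF assms] by blast
  show ?thesis using True sum_indicator_at[OF finite_ch disjoint_ch J, of "\<lambda>_. 1"] by simp
next
  case False
  then show ?thesis using Union_ch[OF assms] sum_indicator_outside[of x "ch D n I" "\<lambda>_. 1"] by auto
qed

lemma sum_atoms_indicator:
  assumes "x \<in> space M" shows "(\<Sum>J\<in>D n. indicator J x :: real) = 1"
proof -
  obtain J where J: "J \<in> D n" "x \<in> J" using obtain_atom assms by blast
  show ?thesis using sum_indicator_at[OF finite_atoms disjoint_atoms J, of "\<lambda>_. 1"] by simp
qed

lemma set_integral_eq_sum_ch:
  fixes g :: "'a \<Rightarrow> real"
  assumes "integrable M g" "I \<in> D n"
  shows "(\<integral>x\<in>I. g x \<partial>M) = (\<Sum>J\<in>ch D n I. (\<integral>x\<in>J. g x \<partial>M))"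
proof -
  have "(\<integral>x\<in>I. g x \<partial>M) = (\<integral>x. (\<Sum>J\<in>ch D n I. indicator J x * g x) \<partial>M)"
    unfolding set_lebesgue_integral_def
  proof (rule Bochner_Integration.integral_cong)
    fix x show "indicator I x *\<^sub>R g x = (\<Sum>J\<in>ch D n I. indicator J x * g x)"
      using indicator_eq_sum_ch[OF assms(2), of x] by (simp add: sum_distrib_right)
  qed simp
  also have "\<dots> = (\<Sum>J\<in>ch D n I. (\<integral>x. indicator J x * g x \<partial>M))"
    by (rule Bochner_Integration.integral_sum)
      (use integrable_mult_indicator[OF _ assms(1)] ch_sets in auto)
  finally show ?thesis unfolding set_lebesgue_integral_def by simp
qed

lemma integral_eq_sum_atoms:
  fixes g :: "'a \<Rightarrow> real"
  assumes "integrable M g"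
  shows "(\<integral>x. g x \<partial>M) = (\<Sum>J\<in>D n. (\<integral>x\<in>J. g x \<partial>M))"
proof -
  have "(\<integral>x. g x \<partial>M) = (\<integral>x. (\<Sum>J\<in>D n. indicator J x * g x) \<partial>M)"
  proof (rule Bochner_Integration.integral_cong)
    fix x assume "x \<in> space M"
    then show "g x = (\<Sum>J\<in>D n. indicator J x * g x)"
      using sum_atoms_indicator[of x n] by (simp add: sum_distrib_right[symmetric])
  qed simp
  also have "\<dots> = (\<Sum>J\<in>D n. (\<integral>x. indicator J x * g x \<partial>M))"
    by (rule Bochner_Integration.integral_sum)
      (use integrable_mult_indicator[OF _ assms] atom_sets in auto)
  finally show ?thesis unfolding set_lebesgue_integral_def by simp
qed

lemma avg_mult_measure: "I \<in> D n \<Longrightarrow> avg M I g * measure M I = (\<integral>x\<in>I. g x \<partial>M)"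
  using atom_measure_pos[of I n] unfolding avg_def by simp

lemma sum_ch_avg_mult_measure:
  fixes g :: "'a \<Rightarrow> real"
  assumes "integrable M g" "I \<in> D n"
  shows "(\<Sum>J\<in>ch D n I. avg M J g * measure M J) = avg M I g * measure M I"
proof -
  have "(\<Sum>J\<in>ch D n I. avg M J g * measure M J) = (\<Sum>J\<in>ch D n I. (\<integral>x\<in>J. g x \<partial>M))"
    by (intro sum.cong refl) (simp add: avg_mult_measure[OF ch_atoms])
  also have "\<dots> = avg M I g * measure M I"
    by (simp add: set_integral_eq_sum_ch[OF assms] avg_mult_measure[OF assms(2)])
  finally show ?thesis .
qed

lemma avg_one: "I \<in> D n \<Longrightarrow> avg M I (\<lambda>_. 1) = 1"
  using atom_measure_pos[of I n] atom_sets[of I n] atom_subset_space[of I n]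
  unfolding avg_def set_lebesgue_integral_def by (simp add: Int_absorb2)

lemma sum_ch_measure:
  assumes "I \<in> D n" shows "(\<Sum>J\<in>ch D n I. measure M J) = measure M I"
proof -
  have "(\<Sum>J\<in>ch D n I. measure M J) = (\<Sum>J\<in>ch D n I. avg M J (\<lambda>_. 1) * measure M J)"
    by (intro sum.cong refl) (simp add: avg_one[OF ch_atoms])
  then show ?thesis using sum_ch_avg_mult_measure[of "\<lambda>_. 1" I n] avg_one assms by simp
qed

lemma avg_cong:
  assumes "\<And>x. x \<in> space M \<Longrightarrow> f x = g x" shows "avg M I f = avg M I g"
proof -
  have "(\<integral>x. indicator I x *\<^sub>R f x \<partial>M) = (\<integral>x. indicator I x *\<^sub>R g x \<partial>M)"
    by (intro Bochner_Integration.integral_cong) (simp_all add: assms)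
  then show ?thesis unfolding avg_def set_lebesgue_integral_def by simp
qed

lemma avg_add:
  fixes f g :: "'a \<Rightarrow> real"
  assumes "integrable M f" "integrable M g" "I \<in> D n"
  shows "avg M I (\<lambda>x. f x + g x) = avg M I f + avg M I g"
  using Bochner_Integration.integral_add[OF integrable_mult_indicator[OF atom_sets[OF assms(3)] assms(1)]
    integrable_mult_indicator[OF atom_sets[OF assms(3)] assms(2)]]
  unfolding avg_def set_lebesgue_integral_def by (simp add: distrib_left add_divide_distrib)

lemma avg_cmult: "avg M I (\<lambda>x. c * f x) = c * avg M I f"
  unfolding avg_def set_lebesgue_integral_def by (simp add: mult.left_commute)

lemma avg_indicator:
  assumes "I \<in> D n" "A \<in> sets M"
  shows "avg M I (indicator A) = measure M (I \<inter> A) / measure M I"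
proof -
  have "I \<inter> A \<inter> space M = I \<inter> A" using atom_subset_space assms(1) by blast
  then show ?thesis unfolding avg_def set_lebesgue_integral_def
    by (simp add: indicator_inter_arith[symmetric])
qed

section \<open>Conditional expectations on atoms\<close>

definition cond_exp_atoms :: "nat \<Rightarrow> ('a \<Rightarrow> real) \<Rightarrow> 'a \<Rightarrow> real" where
  "cond_exp_atoms N g x = (\<Sum>J\<in>D N. avg M J g * indicator J x)"

lemma integrable_cond_exp_atoms: "integrable M (cond_exp_atoms N g)"
  unfolding cond_exp_atoms_def[abs_def] using finite_atoms atom_sets by (intro integrable_step) auto

lemma cond_exp_atoms_eq_avg: "J \<in> D N \<Longrightarrow> x \<in> J \<Longrightarrow> cond_exp_atoms N g x = avg M J g"
  unfolding cond_exp_atoms_def by (rule sum_indicator_at[OF finite_atoms disjoint_atoms])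

lemma cond_exp_atoms_cong: "(\<And>x. x \<in> space M \<Longrightarrow> f x = g x) \<Longrightarrow> cond_exp_atoms N f = cond_exp_atoms N g"
  unfolding cond_exp_atoms_def[abs_def] by (simp cong: avg_cong)

lemma cond_exp_atoms_add:
  assumes "integrable M f" "integrable M g"
  shows "cond_exp_atoms N (\<lambda>x. f x + g x) x = cond_exp_atoms N f x + cond_exp_atoms N g x"
  unfolding cond_exp_atoms_def using avg_add[OF assms]
  by (simp add: distrib_right sum.distrib)

lemma cond_exp_atoms_cmult: "cond_exp_atoms N (\<lambda>x. c * f x) x = c * cond_exp_atoms N f x"
  unfolding cond_exp_atoms_def by (simp add: avg_cmult sum_distrib_left mult.assoc)

lemma cond_exp_atoms_diff:
  assumes "integrable M f" "integrable M g"
  shows "cond_exp_atoms N (\<lambda>x. f x - g x) x = cond_exp_atoms N f x - cond_exp_atoms N g x"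
  using cond_exp_atoms_add[OF assms(1) integrable_mult_right[OF assms(2)], of N "-1" x]
    cond_exp_atoms_cmult[of N "-1" g x] by simp

lemma cond_exp_atoms_one: "x \<in> space M \<Longrightarrow> cond_exp_atoms N (\<lambda>_. 1) x = 1"
  by (metis obtain_atom avg_one cond_exp_atoms_eq_avg)

lemma integral_abs_cond_exp_atoms_le:
  fixes g :: "'a \<Rightarrow> real"
  assumes g: "integrable M g"
  shows "(\<integral>x. \<bar>cond_exp_atoms N g x\<bar> \<partial>M) \<le> (\<integral>x. \<bar>g x\<bar> \<partial>M)"
proof -
  have "(\<integral>x. \<bar>cond_exp_atoms N g x\<bar> \<partial>M) = (\<Sum>J\<in>D N. \<bar>avg M J g\<bar> * measure M J)"
    unfolding cond_exp_atoms_def abs_sum_indicator[OF finite_atoms disjoint_atoms]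
    using finite_atoms atom_sets by (intro integral_step) auto
  also have "\<dots> = (\<Sum>J\<in>D N. \<bar>\<integral>x\<in>J. g x \<partial>M\<bar>)"
    by (intro sum.cong refl) (simp add: avg_mult_measure[symmetric] abs_mult)
  also have "\<dots> \<le> (\<Sum>J\<in>D N. (\<integral>x\<in>J. \<bar>g x\<bar> \<partial>M))"
  proof (intro sum_mono)
    fix J assume "J \<in> D N"
    then have "set_integrable M J g"
      unfolding set_integrable_def by (rule integrable_mult_indicator[OF atom_sets g])
    then show "\<bar>\<integral>x\<in>J. g x \<partial>M\<bar> \<le> (\<integral>x\<in>J. \<bar>g x\<bar> \<partial>M)"
      using set_integral_norm_bound by fastforce
  qed
  also have "\<dots> = (\<integral>x. \<bar>g x\<bar> \<partial>M)"
    using integral_eq_sum_atoms[of "\<lambda>x. \<bar>g x\<bar>" N] g by simp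
  finally show ?thesis .
qed

lemma integral_abs_cond_exp_atoms_sub_le:
  fixes f g :: "'a \<Rightarrow> real"
  assumes f: "integrable M f" and g: "integrable M g"
  shows "(\<integral>x. \<bar>cond_exp_atoms N f x - f x\<bar> \<partial>M)
    \<le> 2 * (\<integral>x. \<bar>g x - f x\<bar> \<partial>M) + (\<integral>x. \<bar>cond_exp_atoms N g x - g x\<bar> \<partial>M)"
proof -
  let ?E = "cond_exp_atoms N"
  have "(\<integral>x. \<bar>?E f x - f x\<bar> \<partial>M)
      \<le> (\<integral>x. \<bar>?E (\<lambda>x. f x - g x) x\<bar> + \<bar>?E g x - g x\<bar> + \<bar>g x - f x\<bar> \<partial>M)"
    using cond_exp_atoms_diff[OF f g] f g integrable_cond_exp_atoms
    by (intro integral_mono) auto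
  also have "\<dots> = (\<integral>x. \<bar>?E (\<lambda>x. f x - g x) x\<bar> \<partial>M) + (\<integral>x. \<bar>?E g x - g x\<bar> \<partial>M)
      + (\<integral>x. \<bar>g x - f x\<bar> \<partial>M)"
    using f g integrable_cond_exp_atoms by simp
  also have "(\<integral>x. \<bar>?E (\<lambda>x. f x - g x) x\<bar> \<partial>M) \<le> (\<integral>x. \<bar>g x - f x\<bar> \<partial>M)"
    using integral_abs_cond_exp_atoms_le[of "\<lambda>x. f x - g x" N] f g by (simp add: abs_minus_commute)
  finally show ?thesis by simp
qed

section \<open>L^1 convergence of the conditional expectations\<close>

definition cond_exp_atoms_converges :: "('a \<Rightarrow> real) \<Rightarrow> bool" where
  "cond_exp_atoms_converges f \<longleftrightarrow> (\<lambda>N. \<integral>x. \<bar>cond_exp_atoms N f x - f x\<bar> \<partial>M) \<longlonglongrightarrow> 0"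

lemma cond_exp_atoms_converges_add:
  assumes f: "integrable M f" and g: "integrable M g"
    and "cond_exp_atoms_converges f" "cond_exp_atoms_converges g"
  shows "cond_exp_atoms_converges (\<lambda>x. f x + g x)"
  unfolding cond_exp_atoms_converges_def
proof (rule Lim_null_comparison)
  let ?d = "\<lambda>N f. \<integral>x. \<bar>cond_exp_atoms N f x - f x\<bar> \<partial>M"
  show "(\<lambda>N. ?d N f + ?d N g) \<longlonglongrightarrow> 0"
    using tendsto_add[of "\<lambda>N. ?d N f" 0 _ "\<lambda>N. ?d N g" 0] assms(3,4)
    unfolding cond_exp_atoms_converges_def by simp
  have "?d N (\<lambda>x. f x + g x) \<le> (\<integral>x. \<bar>cond_exp_atoms N f x - f x\<bar> + \<bar>cond_exp_atoms N g x - g x\<bar> \<partial>M)"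
    for N using f g integrable_cond_exp_atoms by (intro integral_mono) (auto simp: cond_exp_atoms_add)
  also have "(\<integral>x. \<bar>cond_exp_atoms N f x - f x\<bar> + \<bar>cond_exp_atoms N g x - g x\<bar> \<partial>M) = ?d N f + ?d N g"
    for N using f g integrable_cond_exp_atoms by simp
  finally show "\<forall>\<^sub>F N in sequentially. norm (?d N (\<lambda>x. f x + g x)) \<le> ?d N f + ?d N g"
    by simp
qed

lemma cond_exp_atoms_converges_cmult:
  assumes "cond_exp_atoms_converges f" shows "cond_exp_atoms_converges (\<lambda>x. c * f x)"
proof -
  have "(\<lambda>N. \<bar>c\<bar> * (\<integral>x. \<bar>cond_exp_atoms N f x - f x\<bar> \<partial>M)) \<longlonglongrightarrow> \<bar>c\<bar> * 0"
    using assms unfolding cond_exp_atoms_converges_def by (intro tendsto_mult tendsto_const)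
  then show ?thesis unfolding cond_exp_atoms_converges_def
    by (simp add: cond_exp_atoms_cmult abs_mult flip: right_diff_distrib)
qed

lemma cond_exp_atoms_converges_L1_limit:
  fixes f :: "'a \<Rightarrow> real"
  assumes f: "integrable M f" and s: "\<And>i. integrable M (s i)" "\<And>i. cond_exp_atoms_converges (s i)"
    and lim: "(\<lambda>i. \<integral>x. \<bar>s i x - f x\<bar> \<partial>M) \<longlonglongrightarrow> 0"
  shows "cond_exp_atoms_converges f"
  unfolding cond_exp_atoms_converges_def
proof (rule LIMSEQ_I)
  fix r :: real assume "0 < r"
  then obtain i where i: "(\<integral>x. \<bar>s i x - f x\<bar> \<partial>M) < r / 3"
    using LIMSEQ_D[OF lim, of "r / 3"] by auto
  obtain N0 where N0: "\<And>N. N \<ge> N0 \<Longrightarrow> (\<integral>x. \<bar>cond_exp_atoms N (s i) x - s i x\<bar> \<partial>M) < r / 3"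
    using LIMSEQ_D[OF s(2)[of i, unfolded cond_exp_atoms_converges_def], of "r / 3"] \<open>0 < r\<close> by auto
  have "\<bar>\<integral>x. \<bar>cond_exp_atoms N f x - f x\<bar> \<partial>M\<bar> < r" if "N \<ge> N0" for N
    using integral_abs_cond_exp_atoms_sub_le[OF f s(1), of N i] N0[OF that] i by simp
  then show "\<exists>N0. \<forall>N\<ge>N0. norm ((\<integral>x. \<bar>cond_exp_atoms N f x - f x\<bar> \<partial>M) - 0) < r" by auto
qed

text \<open>A set of \<sigma>(D N0) is a union of atoms of every finer partition, so
  cond_exp_atoms N reproduces its indicator exactly once N \<ge> N0.\<close>
lemma cond_exp_atoms_converges_indicator_sigma_atoms:
  assumes A: "A \<in> sigma_sets (space M) (D N0)"
  shows "cond_exp_atoms_converges (indicator A)"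
  unfolding cond_exp_atoms_converges_def
proof (rule tendsto_eventually, rule eventually_sequentiallyI)
  fix N assume N: "N \<ge> N0"
  have As: "A \<in> sets M" using A sigma_atoms_subset_sets by blast
  have "cond_exp_atoms N (indicator A) x = indicator A x" if x: "x \<in> space M" for x
  proof -
    obtain J where J: "J \<in> D N" "x \<in> J" using obtain_atom x by blast
    have "J \<inter> A = J \<or> J \<inter> A = {}" using atom_subset_or_disjoint_sigma[OF A N J(1)] by blast
    then show ?thesis using cond_exp_atoms_eq_avg[OF J] avg_indicator[OF J(1) As]
        atom_measure_pos[OF J(1)] J(2) by (auto simp: indicator_def)
  qed
  then show "(\<integral>x. \<bar>cond_exp_atoms N (indicator A) x - indicator A x\<bar> \<partial>M) = 0"
    by (simp cong: Bochner_Integration.integral_cong)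
qed

lemma cond_exp_atoms_converges_indicator_compl:
  assumes A: "A \<in> sets M" and conv: "cond_exp_atoms_converges (indicator A)"
  shows "cond_exp_atoms_converges (indicator (space M - A))"
proof -
  have "\<bar>cond_exp_atoms N (indicator (space M - A)) x - indicator (space M - A) x\<bar>
      = \<bar>cond_exp_atoms N (indicator A) x - indicator A x\<bar>" if x: "x \<in> space M" for N x
  proof -
    have "cond_exp_atoms N (indicator (space M - A)) = cond_exp_atoms N (\<lambda>x. 1 - indicator A x)"
      by (rule cond_exp_atoms_cong) (auto simp: indicator_def)
    then have "cond_exp_atoms N (indicator (space M - A)) x = 1 - cond_exp_atoms N (indicator A) x"
      using cond_exp_atoms_diff[OF integrable_const integrable_indicator_sets[OF A], where N=N and x=x]
        cond_exp_atoms_one[OF x] by simp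
    then show ?thesis using x by (auto simp: indicator_def)
  qed
  then show ?thesis using conv unfolding cond_exp_atoms_converges_def
    by (simp cong: Bochner_Integration.integral_cong)
qed

lemma sets_eq_sigma_UN_sigma_atoms: "sets M = sigma_sets (space M) (\<Union>N. sigma_sets (space M) (D N))"
proof
  show "sets M \<subseteq> sigma_sets (space M) (\<Union>N. sigma_sets (space M) (D N))"
    unfolding sets_eq_sigma_atoms by (rule sigma_sets_mono') auto
  show "sigma_sets (space M) (\<Union>N. sigma_sets (space M) (D N)) \<subseteq> sets M"
    by (rule sets.sigma_sets_subset) (use sigma_atoms_subset_sets in auto)
qed

lemma Int_stable_UN_sigma_atoms: "Int_stable (\<Union>N. sigma_sets (space M) (D N))"
proof (rule Int_stableI)
  fix a b assume "a \<in> (\<Union>N. sigma_sets (space M) (D N))" "b \<in> (\<Union>N. sigma_sets (space M) (D N))"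
  then obtain n m where a: "a \<in> sigma_sets (space M) (D n)" and b: "b \<in> sigma_sets (space M) (D m)"
    by blast
  interpret S: sigma_algebra "space M" "sigma_sets (space M) (D (max n m))"
    using atom_subset_space by (intro sigma_algebra_sigma_sets) blast
  have "a \<inter> b \<in> sigma_sets (space M) (D (max n m))"
    using a b sigma_atoms_mono[of n "max n m"] sigma_atoms_mono[of m "max n m"] by (intro S.Int) auto
  then show "a \<inter> b \<in> (\<Union>N. sigma_sets (space M) (D N))" by blast
qed

lemma cond_exp_atoms_converges_indicator:
  assumes "A \<in> sets M" shows "cond_exp_atoms_converges (indicator A)"
proof -
  have Pow: "(\<Union>N. sigma_sets (space M) (D N)) \<subseteq> Pow (space M)"
    using sigma_atoms_subset_sets sets.sets_into_space by blast
  show ?thesis using Int_stable_UN_sigma_atoms Pow assms[unfolded sets_eq_sigma_UN_sigma_atoms]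
proof (induction rule: sigma_sets_induct_disjoint)
  case (basic A)
  then show ?case using cond_exp_atoms_converges_indicator_sigma_atoms by blast
next
  case empty
  show ?case unfolding cond_exp_atoms_converges_def cond_exp_atoms_def by (simp add: avg_def)
next
  case (compl A)
  then show ?case using cond_exp_atoms_converges_indicator_compl sets_eq_sigma_UN_sigma_atoms by simp
next
  case (union A)
  have A: "\<And>i. A i \<in> sets M" using union(2) sets_eq_sigma_UN_sigma_atoms by auto
  define U where "U m = (\<Union>i<m. A i)" for m
  have U: "U m \<in> sets M" for m unfolding U_def using A by blast
  have conv_U: "cond_exp_atoms_converges (indicator (U m))" for m
  proof (induction m)
    case 0
    show ?case unfolding cond_exp_atoms_converges_def cond_exp_atoms_def U_def by (simp add: avg_def)
  next
    case (Suc m)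
    have "U m \<inter> A m = {}"
      using union(1) unfolding U_def disjoint_family_on_def by (auto dest: less_imp_neq)
    then have "indicator (U (Suc m)) = (\<lambda>x. indicator (U m) x + indicator (A m) x :: real)"
      by (auto simp: fun_eq_iff U_def lessThan_Suc indicator_def)
    then show ?case using cond_exp_atoms_converges_add[OF integrable_indicator_sets[OF U]
        integrable_indicator_sets[OF A] Suc.IH union(3)] by simp
  qed
  have "(\<lambda>m. \<integral>x. \<bar>indicator (U m) x - indicator (\<Union>i. A i) x :: real\<bar> \<partial>M) \<longlonglongrightarrow> (\<integral>x. 0 \<partial>M)"
  proof (rule integral_dominated_convergence[where w="\<lambda>_. 1"])
    show "AE x in M. (\<lambda>m. \<bar>indicator (U m) x - indicator (\<Union>i. A i) x\<bar> :: real) \<longlonglongrightarrow> 0"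
      using LIMSEQ_indicator_UN[of A] unfolding U_def
      by (intro AE_I2) (auto intro: Lim_null_comparison[where g="\<lambda>_. 0"] simp: LIM_zero_iff tendsto_rabs_zero_iff)
  qed (use U A in \<open>auto simp: indicator_def\<close>)
  then show ?case
    by (intro cond_exp_atoms_converges_L1_limit[OF integrable_indicator_sets integrable_indicator_sets conv_U])
      (use A U in auto)
qed
qed

lemma cond_exp_atoms_converges:
  fixes f :: "'a \<Rightarrow> real"
  assumes "integrable M f" shows "cond_exp_atoms_converges f"
  using assms
proof (induction rule: integrable_induct)
  case (base A c)
  then show ?case using cond_exp_atoms_converges_cmult[OF cond_exp_atoms_converges_indicator[OF base(1)], of c]
    by (simp add: mult.commute)
next
  case (add f g)
  then show ?case using cond_exp_atoms_converges_add by blast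
next
  case (lim f s)
  have f: "integrable M f" and s: "\<And>i. integrable M (s i)" "\<And>i. cond_exp_atoms_converges (s i)"
    and conv: "\<And>x. x \<in> space M \<Longrightarrow> (\<lambda>i. s i x) \<longlonglongrightarrow> f x"
    and bound: "\<And>i x. x \<in> space M \<Longrightarrow> norm (s i x) \<le> 2 * norm (f x)"
    by fact+
  have "(\<lambda>i. \<integral>x. \<bar>s i x - f x\<bar> \<partial>M) \<longlonglongrightarrow> (\<integral>x. 0 \<partial>M)"
  proof (rule integral_dominated_convergence[where w="\<lambda>x. 3 * \<bar>f x\<bar>"])
    show "AE x in M. (\<lambda>i. \<bar>s i x - f x\<bar>) \<longlonglongrightarrow> 0"
      using conv by (intro AE_I2) (simp add: tendsto_rabs_zero_iff LIM_zero_iff)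
    show "AE x in M. norm \<bar>s i x - f x\<bar> \<le> 3 * \<bar>f x\<bar>" for i
      using bound by (intro AE_I2) (smt (verit) real_norm_def)
  qed (use f s in auto)
  then show ?case by (intro cond_exp_atoms_converges_L1_limit[OF f s]) simp
qed

section \<open>Orthogonality of martingale differences\<close>

definition atom_inner :: "nat \<Rightarrow> ('a \<Rightarrow> real) \<Rightarrow> ('a \<Rightarrow> real) \<Rightarrow> real" where
  "atom_inner N f h = (\<Sum>J\<in>D N. avg M J f * avg M J h * measure M J)"

lemma integral_cond_exp_atoms_mult:
  fixes f h :: "'a \<Rightarrow> real"
  assumes h: "integrable M h"
  shows "(\<integral>x. cond_exp_atoms N f x * h x \<partial>M) = atom_inner N f h"
proof -
  have "(\<integral>x. cond_exp_atoms N f x * h x \<partial>M) = (\<integral>x. (\<Sum>J\<in>D N. avg M J f * (indicator J x * h x)) \<partial>M)"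
    unfolding cond_exp_atoms_def by (simp add: sum_distrib_right mult.assoc)
  also have "\<dots> = (\<Sum>J\<in>D N. avg M J f * (\<integral>x\<in>J. h x \<partial>M))"
    using integrable_mult_indicator[OF atom_sets h]
    by (subst Bochner_Integration.integral_sum) (auto simp: set_lebesgue_integral_def)
  also have "\<dots> = atom_inner N f h"
    unfolding atom_inner_def by (intro sum.cong refl) (simp add: avg_mult_measure[symmetric])
  finally show ?thesis .
qed

lemma atom_inner_LIMSEQ:
  fixes f h :: "'a \<Rightarrow> real"
  assumes f: "integrable M f" and hm: "h \<in> borel_measurable M"
    and hb: "\<And>x. x \<in> space M \<Longrightarrow> \<bar>h x\<bar> \<le> K"
  shows "(\<lambda>N. atom_inner N f h) \<longlonglongrightarrow> (\<integral>x. f x * h x \<partial>M)"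
proof -
  let ?d = "\<lambda>N x. cond_exp_atoms N f x - f x"
  have hi: "integrable M h" using hb hm by (intro integrable_const_bound[where B=K]) auto
  have "(\<lambda>N. atom_inner N f h - (\<integral>x. f x * h x \<partial>M)) \<longlonglongrightarrow> 0"
  proof (rule Lim_null_comparison)
    show "(\<lambda>N. K * (\<integral>x. \<bar>?d N x\<bar> \<partial>M)) \<longlonglongrightarrow> 0"
      using tendsto_mult_right_zero cond_exp_atoms_converges[OF f]
      unfolding cond_exp_atoms_converges_def by blast
    have "\<bar>atom_inner N f h - (\<integral>x. f x * h x \<partial>M)\<bar> \<le> K * (\<integral>x. \<bar>?d N x\<bar> \<partial>M)" for N
    proof -
      have int_d: "integrable M (?d N)" using f integrable_cond_exp_atoms by auto
      have "atom_inner N f h - (\<integral>x. f x * h x \<partial>M) = (\<integral>x. ?d N x * h x \<partial>M)"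
        using integrable_mult_bounded[OF integrable_cond_exp_atoms hm hb]
          integrable_mult_bounded[OF f hm hb]
        by (simp add: integral_cond_exp_atoms_mult[OF hi] left_diff_distrib)
      also have "\<bar>\<dots>\<bar> \<le> (\<integral>x. \<bar>?d N x * h x\<bar> \<partial>M)" by (rule integral_abs_bound)
      also have "\<dots> \<le> (\<integral>x. \<bar>?d N x\<bar> * K \<partial>M)"
      proof (rule integral_mono)
        show "integrable M (\<lambda>x. \<bar>?d N x * h x\<bar>)"
          by (rule integrable_abs[OF integrable_mult_bounded[OF int_d hm hb]])
        show "\<bar>?d N x * h x\<bar> \<le> \<bar>?d N x\<bar> * K" if "x \<in> space M" for x
          using hb[OF that] by (simp add: abs_mult mult_left_mono)
      qed (use int_d in auto)
      finally show ?thesis by (simp add: mult.commute)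
    qed
    then show "\<forall>\<^sub>F N in sequentially. norm (atom_inner N f h - (\<integral>x. f x * h x \<partial>M))
        \<le> K * (\<integral>x. \<bar>?d N x\<bar> \<partial>M)" by simp
  qed
  then show ?thesis by (simp add: LIM_zero_iff)
qed

lemma Delta_eq_sum_ch:
  assumes "I \<in> D n" and "x \<in> space M"
  shows "Delta M D n I g x = (\<Sum>J\<in>ch D n I. (avg M J g - avg M I g) * indicator J x)"
  unfolding Delta_def indicator_eq_sum_ch[OF assms(1), of x]
  by (simp add: sum_distrib_left left_diff_distrib sum_subtractf)

lemma Delta_mult_eq_sum_ch:
  assumes "I \<in> D n" and "x \<in> space M"
  shows "Delta M D n I f x * Delta M D n I h x =
    (\<Sum>J\<in>ch D n I. ((avg M J f - avg M I f) * (avg M J h - avg M I h)) * indicator J x)"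
  unfolding Delta_eq_sum_ch[OF assms] by (rule sum_indicator_mult[OF finite_ch disjoint_ch])

lemma abs_Delta_mult_eq_sum_ch:
  assumes "I \<in> D n" and "x \<in> space M"
  shows "\<bar>Delta M D n I f x\<bar> * \<bar>Delta M D n I h x\<bar> =
    (\<Sum>J\<in>ch D n I. \<bar>(avg M J f - avg M I f) * (avg M J h - avg M I h)\<bar> * indicator J x)"
  unfolding abs_mult[symmetric] Delta_mult_eq_sum_ch[OF assms]
  by (rule abs_sum_indicator[OF finite_ch disjoint_ch])

lemma integrable_Delta_mult:
  assumes "I \<in> D n" shows "integrable M (\<lambda>x. Delta M D n I f x * Delta M D n I h x)"
proof -
  have "integrable M (\<lambda>x. Delta M D n I f x * Delta M D n I h x) \<longleftrightarrow> integrable M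
      (\<lambda>x. \<Sum>J\<in>ch D n I. ((avg M J f - avg M I f) * (avg M J h - avg M I h)) * indicator J x)"
    by (intro Bochner_Integration.integrable_cong) (simp_all add: Delta_mult_eq_sum_ch[OF assms])
  then show ?thesis by (simp add: integrable_step[OF finite_ch ch_sets])
qed

lemma integrable_abs_Delta_mult:
  assumes "I \<in> D n" shows "integrable M (\<lambda>x. \<bar>Delta M D n I f x\<bar> * \<bar>Delta M D n I h x\<bar>)"
proof -
  have "integrable M (\<lambda>x. \<bar>Delta M D n I f x\<bar> * \<bar>Delta M D n I h x\<bar>) \<longleftrightarrow> integrable M
      (\<lambda>x. \<Sum>J\<in>ch D n I. \<bar>(avg M J f - avg M I f) * (avg M J h - avg M I h)\<bar> * indicator J x)"
    by (intro Bochner_Integration.integrable_cong) (simp_all add: abs_Delta_mult_eq_sum_ch[OF assms])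
  then show ?thesis by (simp add: integrable_step[OF finite_ch ch_sets])
qed

lemma integral_Delta_mult:
  fixes f h :: "'a \<Rightarrow> real"
  assumes I: "I \<in> D n" and f: "integrable M f" and h: "integrable M h"
  shows "(\<integral>x. Delta M D n I f x * Delta M D n I h x \<partial>M) =
    (\<Sum>J\<in>ch D n I. avg M J f * avg M J h * measure M J) - avg M I f * avg M I h * measure M I"
proof -
  define a b where "a = avg M I f" and "b = avg M I h"
  have "(\<integral>x. Delta M D n I f x * Delta M D n I h x \<partial>M) =
      (\<Sum>J\<in>ch D n I. ((avg M J f - a) * (avg M J h - b)) * measure M J)"
    unfolding a_def b_def
    using integral_step[OF finite_ch ch_sets]
    by (simp add: Delta_mult_eq_sum_ch[OF I] cong: Bochner_Integration.integral_cong)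
  also have "\<dots> = (\<Sum>J\<in>ch D n I. avg M J f * avg M J h * measure M J)
       - a * (\<Sum>J\<in>ch D n I. avg M J h * measure M J) - b * (\<Sum>J\<in>ch D n I. avg M J f * measure M J)
       + a * b * (\<Sum>J\<in>ch D n I. measure M J)"
    by (simp add: algebra_simps sum.distrib sum_subtractf sum_distrib_left)
  also have "\<dots> = (\<Sum>J\<in>ch D n I. avg M J f * avg M J h * measure M J) - a * b * measure M I"
    unfolding sum_ch_avg_mult_measure[OF h I] sum_ch_avg_mult_measure[OF f I] sum_ch_measure[OF I]
      a_def b_def by (simp add: algebra_simps)
  finally show ?thesis unfolding a_def b_def .
qed

lemma atom_inner_eq_sum_Delta:
  fixes f h :: "'a \<Rightarrow> real"
  assumes f: "integrable M f" and h: "integrable M h" and f0: "(\<integral>x. f x \<partial>M) = 0"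
  shows "atom_inner N f h = (\<Sum>n<N. \<Sum>I\<in>D n. (\<integral>x. Delta M D n I f x * Delta M D n I h x \<partial>M))"
proof (induction N)
  case 0
  have "avg M (space M) f = 0"
    using f0 unfolding avg_def set_lebesgue_integral_def by (simp cong: Bochner_Integration.integral_cong)
  then show ?case unfolding atom_inner_def atoms_0 by simp
next
  case (Suc N)
  have "atom_inner (Suc N) f h = (\<Sum>I\<in>D N. \<Sum>J\<in>ch D N I. avg M J f * avg M J h * measure M J)"
    unfolding atom_inner_def by (rule sum_atoms_Suc)
  also have "\<dots> = atom_inner N f h + (\<Sum>I\<in>D N. (\<integral>x. Delta M D N I f x * Delta M D N I h x \<partial>M))"
    unfolding atom_inner_def by (simp add: integral_Delta_mult[OF _ f h] flip: sum.distrib)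
  finally show ?case using Suc.IH by simp
qed

abbreviation Delta_cross :: "('a \<Rightarrow> real) \<Rightarrow> ('a \<Rightarrow> real) \<Rightarrow> ennreal" where
  "Delta_cross f h \<equiv> (\<integral>\<^sup>+x. (\<Sum>n. \<Sum>I\<in>D n. ennreal (\<bar>Delta M D n I f x\<bar> * \<bar>Delta M D n I h x\<bar>)) \<partial>M)"

lemma integral_mult_le_Delta_cross:
  fixes f h :: "'a \<Rightarrow> real"
  assumes f: "integrable M f" and f0: "(\<integral>x. f x \<partial>M) = 0"
    and hm: "h \<in> borel_measurable M" and hb: "\<And>x. x \<in> space M \<Longrightarrow> \<bar>h x\<bar> \<le> K"
  shows "ennreal (\<integral>x. f x * h x \<partial>M) \<le> Delta_cross f h"
proof (rule LIMSEQ_le_const2)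
  have h: "integrable M h" using hb hm by (intro integrable_const_bound[where B=K]) auto
  let ?P = "\<lambda>N x. \<Sum>n<N. \<Sum>I\<in>D n. \<bar>Delta M D n I f x\<bar> * \<bar>Delta M D n I h x\<bar>"
  show "(\<lambda>N. ennreal (atom_inner N f h)) \<longlonglongrightarrow> ennreal (\<integral>x. f x * h x \<partial>M)"
    by (intro tendsto_ennrealI atom_inner_LIMSEQ[OF f hm hb])
  show "\<exists>N0. \<forall>N\<ge>N0. ennreal (atom_inner N f h) \<le> Delta_cross f h"
  proof (intro exI allI impI)
    fix N
    have "atom_inner N f h \<le> (\<Sum>n<N. \<Sum>I\<in>D n. (\<integral>x. \<bar>Delta M D n I f x\<bar> * \<bar>Delta M D n I h x\<bar> \<partial>M))"
      unfolding atom_inner_eq_sum_Delta[OF f h f0]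
      by (intro sum_mono integral_mono integrable_Delta_mult integrable_abs_Delta_mult)
        (auto simp: abs_mult[symmetric])
    also have "\<dots> = (\<integral>x. ?P N x \<partial>M)"
      by (simp add: integrable_abs_Delta_mult Bochner_Integration.integral_sum)
    also have "ennreal \<dots> = (\<integral>\<^sup>+x. ennreal (?P N x) \<partial>M)"
      by (intro nn_integral_eq_integral[symmetric])
        (auto intro!: Bochner_Integration.integrable_sum integrable_abs_Delta_mult sum_nonneg)
    also have "\<dots> = (\<integral>\<^sup>+x. (\<Sum>n<N. \<Sum>I\<in>D n. ennreal (\<bar>Delta M D n I f x\<bar> * \<bar>Delta M D n I h x\<bar>)) \<partial>M)"
      by (intro nn_integral_cong) (simp add: sum_nonneg)
    also have "\<dots> \<le> Delta_cross f h"
      by (intro nn_integral_mono sum_le_suminf summableI) auto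
    finally show "ennreal (atom_inner N f h) \<le> Delta_cross f h" by (simp add: ennreal_leI)
  qed
qed

section \<open>Square functions and duality\<close>

lemma borel_measurable_Delta: "I \<in> D n \<Longrightarrow> Delta M D n I g \<in> borel_measurable M"
  unfolding Delta_def[abs_def]
  by (intro borel_measurable_diff borel_measurable_sum borel_measurable_times borel_measurable_const
      borel_measurable_indicator) (use atom_sets ch_sets in blast)+

lemma borel_measurable_Ssq [measurable]: "Ssq M D g \<in> borel_measurable M"
  unfolding Ssq_def[abs_def]
  by (intro borel_measurable_suminf_order borel_measurable_sum measurable_compose[OF _ measurable_ennreal]
      borel_measurable_power borel_measurable_Delta)

lemma Ssq_cmult: "Ssq M D (\<lambda>x. c * g x) x = ennreal (c\<^sup>2) * Ssq M D g x"
proof -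
  have "Delta M D n I (\<lambda>x. c * g x) x = c * Delta M D n I g x" for n I
    unfolding Delta_def by (simp add: avg_cmult sum_distrib_left right_diff_distrib mult.assoc)
  then have "(\<Sum>I\<in>D n. ennreal ((Delta M D n I (\<lambda>x. c * g x) x)\<^sup>2))
      = ennreal (c\<^sup>2) * (\<Sum>I\<in>D n. ennreal ((Delta M D n I g x)\<^sup>2))" for n
    unfolding sum_distrib_left
    by (intro sum.cong refl) (simp add: power_mult_distrib ennreal_mult del: sum_ennreal)
  then show ?thesis unfolding Ssq_def by (simp del: sum_ennreal)
qed

lemma Snorm2_cmult:
  assumes [measurable]: "u \<in> borel_measurable M"
  shows "Snorm2 M D u (\<lambda>x. c * g x) = ennreal (c\<^sup>2) * Snorm2 M D u g"
  unfolding Snorm2_def Ssq_cmult mult.assoc by (rule nn_integral_cmult) measurable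

lemma wnorm2_cmult:
  assumes [measurable]: "u \<in> borel_measurable M" "g \<in> borel_measurable M"
  shows "wnorm2 M u (\<lambda>x. c * g x) = ennreal (c\<^sup>2) * wnorm2 M u g"
proof -
  have "wnorm2 M u (\<lambda>x. c * g x) = (\<integral>\<^sup>+x. ennreal (c\<^sup>2) * ennreal ((g x)\<^sup>2 * u x) \<partial>M)"
    unfolding wnorm2_def by (intro nn_integral_cong) (simp add: ennreal_mult' power_mult_distrib mult.assoc)
  also have "\<dots> = ennreal (c\<^sup>2) * wnorm2 M u g"
    unfolding wnorm2_def by (rule nn_integral_cmult) measurable
  finally show ?thesis .
qed

text \<open>The operator norm is homogeneous: rescale g to the unit ball by 1 / sqrt r.\<close>
lemma Snorm2_le_opnorm2:
  fixes g u :: "'a \<Rightarrow> real"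
  assumes g: "integrable M g" and u: "u \<in> borel_measurable M" and r: "0 < r"
    and wn: "wnorm2 M u g \<le> ennreal r"
  shows "Snorm2 M D u g \<le> opnorm2 M D u * ennreal r"
proof -
  define c where "c = 1 / sqrt r"
  have c2: "c\<^sup>2 = 1 / r" using r unfolding c_def by (simp add: power_divide)
  have "wnorm2 M u (\<lambda>x. c * g x) = ennreal (1 / r) * wnorm2 M u g"
    using wnorm2_cmult[OF u borel_measurable_integrable[OF g], of c] c2 by simp
  also have "\<dots> \<le> ennreal (1 / r) * ennreal r" using wn by (rule mult_left_mono) simp
  also have "\<dots> = 1" using r by (simp flip: ennreal_mult)
  finally have "Snorm2 M D u (\<lambda>x. c * g x) \<le> opnorm2 M D u"
    unfolding opnorm2_def using g by (intro SUP_upper) auto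
  then have "ennreal (1 / r) * Snorm2 M D u g \<le> opnorm2 M D u"
    using Snorm2_cmult[OF u, of c g] c2 by simp
  then have "ennreal r * (ennreal (1 / r) * Snorm2 M D u g) \<le> ennreal r * opnorm2 M D u"
    by (rule mult_left_mono) simp
  then show ?thesis using r by (simp add: mult.commute mult.assoc[symmetric] flip: ennreal_mult)
qed

lemma AE_Delta_eq_0_if_Snorm2_eq_0:
  fixes g u :: "'a \<Rightarrow> real"
  assumes [measurable]: "u \<in> borel_measurable M"
    and upos: "AE x in M. 0 < u x" and z: "Snorm2 M D u g = 0"
  shows "AE x in M. \<forall>n. \<forall>I\<in>D n. Delta M D n I g x = 0"
proof -
  have "AE x in M. Ssq M D g x * ennreal (u x) = 0"
    using z unfolding Snorm2_def by (subst (asm) nn_integral_0_iff_AE) measurable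
  then show ?thesis using upos
  proof eventually_elim
    case (elim x)
    then have "Ssq M D g x = 0" by (simp add: ennreal_eq_0_iff)
    then have "\<forall>n. (\<Sum>I\<in>D n. ennreal ((Delta M D n I g x)\<^sup>2)) = 0"
      unfolding Ssq_def by (subst (asm) suminf_eq_zero_iff) (auto simp del: sum_ennreal)
    then have "\<forall>n. \<forall>I\<in>D n. ennreal ((Delta M D n I g x)\<^sup>2) = 0"
      using finite_atoms by (simp add: sum_eq_0_iff del: sum_ennreal)
    then show ?case by (simp add: ennreal_eq_0_iff)
  qed
qed

lemma Delta_cross_eq_0:
  fixes f h :: "'a \<Rightarrow> real"
  assumes "(AE x in M. \<forall>n. \<forall>I\<in>D n. Delta M D n I f x = 0) \<or> (AE x in M. \<forall>n. \<forall>I\<in>D n. Delta M D n I h x = 0)"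
  shows "Delta_cross f h = 0"
proof -
  have "AE x in M. (\<Sum>n. \<Sum>I\<in>D n. ennreal (\<bar>Delta M D n I f x\<bar> * \<bar>Delta M D n I h x\<bar>)) = 0"
    using assms by (elim disjE) (erule eventually_mono, simp)+
  then show ?thesis by (simp cong: nn_integral_cong_AE)
qed

lemma Delta_cross_le_amgm:
  fixes f h w :: "'a \<Rightarrow> real"
  assumes [measurable]: "w \<in> borel_measurable M" and wpos: "AE x in M. 0 < w x" and t: "0 < t"
  shows "Delta_cross f h \<le> ennreal (t / 2) * Snorm2 M D w f + ennreal (1 / (2 * t)) * Snorm2 M D (\<lambda>x. 1 / w x) h"
proof -
  have "Delta_cross f h \<le> (\<integral>\<^sup>+x. ennreal (t / 2) * (Ssq M D f x * ennreal (w x))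
      + ennreal (1 / (2 * t)) * (Ssq M D h x * ennreal (1 / w x)) \<partial>M)"
  proof (rule nn_integral_mono_AE)
    show "AE x in M. (\<Sum>n. \<Sum>I\<in>D n. ennreal (\<bar>Delta M D n I f x\<bar> * \<bar>Delta M D n I h x\<bar>))
      \<le> ennreal (t / 2) * (Ssq M D f x * ennreal (w x)) + ennreal (1 / (2 * t)) * (Ssq M D h x * ennreal (1 / w x))"
      using wpos
    proof eventually_elim
      case (elim x)
      let ?A = "\<lambda>n I. ennreal ((Delta M D n I f x)\<^sup>2) * ennreal (w x)"
      let ?B = "\<lambda>n I. ennreal ((Delta M D n I h x)\<^sup>2) * ennreal (1 / w x)"
      have "ennreal (\<bar>Delta M D n I f x\<bar> * \<bar>Delta M D n I h x\<bar>)
          \<le> ennreal (t / 2) * ?A n I + ennreal (1 / (2 * t)) * ?B n I" for n I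
      proof -
        have "ennreal (\<bar>Delta M D n I f x\<bar> * \<bar>Delta M D n I h x\<bar>) \<le>
            ennreal (t / 2 * ((Delta M D n I f x)\<^sup>2 * w x) + 1 / (2 * t) * ((Delta M D n I h x)\<^sup>2 * (1 / w x)))"
          by (rule ennreal_leI) (rule abs_mult_le_amgm[OF t elim])
        also have "\<dots> = ennreal (t / 2 * ((Delta M D n I f x)\<^sup>2 * w x))
            + ennreal (1 / (2 * t) * ((Delta M D n I h x)\<^sup>2 * (1 / w x)))"
          by (rule ennreal_plus) (use t elim in simp_all)
        also have "ennreal (t / 2 * ((Delta M D n I f x)\<^sup>2 * w x)) = ennreal (t / 2) * ?A n I"
          using t elim by (simp flip: ennreal_mult)
        also have "ennreal (1 / (2 * t) * ((Delta M D n I h x)\<^sup>2 * (1 / w x))) = ennreal (1 / (2 * t)) * ?B n I"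
          using t elim by (simp flip: ennreal_mult)
        finally show ?thesis .
      qed
      then have "(\<Sum>n. \<Sum>I\<in>D n. ennreal (\<bar>Delta M D n I f x\<bar> * \<bar>Delta M D n I h x\<bar>))
          \<le> (\<Sum>n. \<Sum>I\<in>D n. ennreal (t / 2) * ?A n I + ennreal (1 / (2 * t)) * ?B n I)"
        by (intro suminf_le summableI sum_mono)
      also have "\<dots> = ennreal (t / 2) * (\<Sum>n. \<Sum>I\<in>D n. ?A n I) + ennreal (1 / (2 * t)) * (\<Sum>n. \<Sum>I\<in>D n. ?B n I)"
        by (simp add: sum.distrib sum_distrib_left[symmetric] suminf_add[symmetric] del: sum_ennreal)
      also have "\<dots> = ennreal (t / 2) * (Ssq M D f x * ennreal (w x)) + ennreal (1 / (2 * t)) * (Ssq M D h x * ennreal (1 / w x))"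
        unfolding Ssq_def by (simp add: sum_distrib_right[symmetric] del: sum_ennreal)
      finally show ?case .
    qed
  qed
  also have "\<dots> = ennreal (t / 2) * Snorm2 M D w f + ennreal (1 / (2 * t)) * Snorm2 M D (\<lambda>x. 1 / w x) h"
    unfolding Snorm2_def by (subst nn_integral_add; simp add: nn_integral_cmult)
  finally show ?thesis .
qed

lemma integral_mult_le_opnorm2_Snorm2:
  fixes f h w :: "'a \<Rightarrow> real"
  assumes w: "w \<in> borel_measurable M" and wpos: "AE x in M. 0 < w x"
    and f: "integrable M f" and f0: "(\<integral>x. f x \<partial>M) = 0"
    and hm: "h \<in> borel_measurable M" and hb: "\<And>x. x \<in> space M \<Longrightarrow> \<bar>h x\<bar> \<le> K"
    and a0: "0 \<le> (\<integral>x. f x * h x \<partial>M)"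
    and h_norm: "wnorm2 M (\<lambda>x. 1 / w x) h \<le> ennreal (\<integral>x. f x * h x \<partial>M)"
  shows "ennreal (\<integral>x. f x * h x \<partial>M) \<le> opnorm2 M D (\<lambda>x. 1 / w x) * Snorm2 M D w f"
proof -
  define a where "a = (\<integral>x. f x * h x \<partial>M)"
  define u where "u x = 1 / w x" for x
  have u[measurable]: "u \<in> borel_measurable M" unfolding u_def[abs_def] using w by measurable
  have upos: "AE x in M. 0 < u x" using wpos unfolding u_def by eventually_elim simp
  have cross: "ennreal a \<le> Delta_cross f h"
    unfolding a_def by (rule integral_mult_le_Delta_cross[OF f f0 hm hb])
  show ?thesis
  proof (cases "a = 0 \<or> Delta_cross f h = 0")
    case True
    then show ?thesis using cross unfolding a_def by auto
  next
    case False
    then have "0 < a" and "Delta_cross f h \<noteq> 0" using a0 unfolding a_def by auto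
    then have C: "Snorm2 M D w f \<noteq> 0" and Sh: "Snorm2 M D u h \<noteq> 0"
      using Delta_cross_eq_0 AE_Delta_eq_0_if_Snorm2_eq_0[OF w wpos]
        AE_Delta_eq_0_if_Snorm2_eq_0[OF u upos] by blast+
    have hi: "integrable M h" using hb hm by (intro integrable_const_bound[where B=K]) auto
    have Sh_le: "Snorm2 M D u h \<le> opnorm2 M D u * ennreal a"
      using Snorm2_le_opnorm2[OF hi u \<open>0 < a\<close>] h_norm unfolding a_def u_def by simp
    show ?thesis
    proof (cases "opnorm2 M D u")
      case (real b)
      have "0 < b" using real Sh Sh_le by (auto simp: le_less)
      have "ennreal a \<le> ennreal (b / 2) * Snorm2 M D w f + ennreal (1 / (2 * b)) * Snorm2 M D u h"
        using cross Delta_cross_le_amgm[OF w wpos \<open>0 < b\<close>, of f h] unfolding u_def by simp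
      also have "\<dots> \<le> ennreal (b / 2) * Snorm2 M D w f + ennreal (1 / (2 * b)) * (ennreal b * ennreal a)"
        using Sh_le real by (intro add_mono mult_left_mono) auto
      finally show ?thesis
        using ennreal_le_mult_if_le_amgm[OF less_imp_le[OF \<open>0 < a\<close>] \<open>0 < b\<close>] real
        unfolding a_def u_def by simp
    next
      case top
      then show ?thesis using C unfolding u_def by (simp add: ennreal_mult_eq_top_iff)
    qed
  qed
qed

lemma integrable_mult_truncated_dual:
  assumes "w \<in> borel_measurable M" "f \<in> borel_measurable M"
  shows "integrable M (\<lambda>x. f x * truncated_dual K w f x)"
proof (rule integrable_const_bound[where B="real K * (real K * real K)"])
  show "AE x in M. norm (f x * truncated_dual K w f x) \<le> real K * (real K * real K)"
  proof (rule AE_I2)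
    fix x
    have "\<bar>f x\<bar> * \<bar>truncated_dual K w f x\<bar> \<le> real K * (real K * real K)" if "\<bar>f x\<bar> \<le> real K"
      using that abs_truncated_dual_le by (intro mult_mono) auto
    then show "norm (f x * truncated_dual K w f x) \<le> real K * (real K * real K)"
      by (cases "\<bar>f x\<bar> \<le> real K") (auto simp: abs_mult truncated_dual_def)
  qed
qed (use assms in measurable)

lemma nn_integral_mult_truncated_dual:
  assumes "w \<in> borel_measurable M" "f \<in> borel_measurable M"
  shows "(\<integral>\<^sup>+x. ennreal (f x * truncated_dual K w f x) \<partial>M) = ennreal (\<integral>x. f x * truncated_dual K w f x \<partial>M)"
  by (intro nn_integral_eq_integral integrable_mult_truncated_dual[OF assms])
    (simp add: mult_truncated_dual_nonneg)

lemma wnorm2_truncated_dual_le: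
  assumes "w \<in> borel_measurable M" "f \<in> borel_measurable M"
  shows "wnorm2 M (\<lambda>x. 1 / w x) (truncated_dual K w f) \<le> ennreal (\<integral>x. f x * truncated_dual K w f x \<partial>M)"
  unfolding wnorm2_def nn_integral_mult_truncated_dual[OF assms, symmetric]
  by (intro nn_integral_mono ennreal_leI truncated_dual_square_div_le)

lemma wnorm2_eq_SUP_truncated_dual:
  assumes [measurable]: "w \<in> borel_measurable M" "f \<in> borel_measurable M"
  shows "wnorm2 M w f = (SUP K. ennreal (\<integral>x. f x * truncated_dual K w f x \<partial>M))"
proof -
  have "wnorm2 M w f = (\<integral>\<^sup>+x. (SUP K. ennreal (f x * truncated_dual K w f x)) \<partial>M)"
    unfolding wnorm2_def SUP_mult_truncated_dual ..
  also have "\<dots> = (SUP K. \<integral>\<^sup>+x. ennreal (f x * truncated_dual K w f x) \<partial>M)"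
  proof (rule nn_integral_monotone_convergence_SUP)
    show "incseq (\<lambda>K x. ennreal (f x * truncated_dual K w f x))"
    proof (intro incseq_SucI le_funI ennreal_leI)
      fix K x show "f x * truncated_dual K w f x \<le> f x * truncated_dual (Suc K) w f x"
        using incseqD[OF incseq_mult_truncated_dual, of K "Suc K"] by simp
    qed
  qed measurable
  finally show ?thesis by (simp add: nn_integral_mult_truncated_dual[OF assms])
qed

end

theorem proposition4p1:
  fixes M :: "'a measure" and D :: "nat \<Rightarrow> 'a set set"
    and w f :: "'a \<Rightarrow> real"
  assumes "prob_space M"
    and "atomic_filtration M D"
    and "w \<in> borel_measurable M"
    and "AE x in M. w x > 0"
    and "integrable M f"
    and "(\<integral>x. f x \<partial>M) = 0"
  shows "wnorm2 M w f \<le> opnorm2 M D (\<lambda>x. 1 / w x) * Snorm2 M D w f"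
proof -
  interpret atomic_filtration_space M D
    using assms(1,2) by (rule atomic_filtration_space.intro[OF _ atomic_filtration_space_axioms.intro])
  have f: "f \<in> borel_measurable M" using assms(5) by (rule borel_measurable_integrable)
  show ?thesis
    unfolding wnorm2_eq_SUP_truncated_dual[OF assms(3) f]
  proof (rule SUP_least)
    fix K
    show "ennreal (\<integral>x. f x * truncated_dual K w f x \<partial>M) \<le> opnorm2 M D (\<lambda>x. 1 / w x) * Snorm2 M D w f"
      using assms(3) f mult_truncated_dual_nonneg
      by (intro integral_mult_le_opnorm2_Snorm2[OF assms(3-6) _ abs_truncated_dual_le _
          wnorm2_truncated_dual_le[OF assms(3) f]] Bochner_Integration.integral_nonneg) auto
  qed
qed

end
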